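(* Let $(E,P,\vartheta)$ be a complete bipolar metric space and let $F\colon E\cup P\to E\cup P$ satisfy $F(E)\subseteq E$, $F(P)\subseteq P$. Suppose there exist $\pi\in(0,1)$, an integer $\sigma\geq 1$ and constants $q_1,\dots,q_\sigma\in(0,\infty)$ such that $$\sum_{\upsilon=1}^{\sigma} q_\upsilon\,\vartheta^\upsilon(Fe,Ff)\leq\pi\sum_{\upsilon=1}^{\sigma}q_\upsilon\,\vartheta^\upsilon(e,f)\quad\text{for all } e\in E,\ f\in P.$$ Then $F$ has a unique fixed point.
   Context: A bipolar metric space is a triple $(E,P,\vartheta)$ where $E,P$ are nonempty sets and $\vartheta\colon E\times P\to[0,\infty)$ satisfies: (1) for $e\in E$, $f\in P$, $\vartheta(e,f)=0$ iff $e=f$; (2) $\vartheta(e,f)=\vartheta(f,e)$ whenever $e,f\in E\cap P$; (3) $\vartheta(e,f)\leq\vartheta(e,z)+\vartheta(r,z)+\vartheta(r,f)$ for all $e,r\in E$, $z,f\in P$. A sequence $(x_n)$ in $E$ converges to $y\in P$ if $\vartheta(x_n,y)\to0$; a sequence $(y_n)$ in $P$ converges to $x\in E$ if $\vartheta(x,y_n)\to0$. A bisequence $(x_n,y_n)$ with $x_n\in E$, $y_n\in P$ is Cauchy if for every $\varepsilon>0$ there is $N$ with $\vartheta(x_n,y_m)<\varepsilon$ for all $n,m\geq N$; the space is complete if every Cauchy bisequence is convergent. $\vartheta^\upsilon$ denotes the $\upsilon$-th power of $\vartheta$. A fixed point of $F$ is a point $g$ with $Fg=g$. *)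

theory Defs
  imports Complex_Main
begin

text \<open>Bipolar metric space (E, P, d): d is only meaningful on E \<times> P.\<close>
definition bipolar_metric_space :: "'a set \<Rightarrow> 'a set \<Rightarrow> ('a \<Rightarrow> 'a \<Rightarrow> real) \<Rightarrow> bool" where
  "bipolar_metric_space E P d \<longleftrightarrow>
     E \<noteq> {} \<and> P \<noteq> {} \<and>
     (\<forall>e\<in>E. \<forall>f\<in>P. d e f \<ge> 0) \<and>
     (\<forall>e\<in>E. \<forall>f\<in>P. d e f = 0 \<longleftrightarrow> e = f) \<and>
     (\<forall>e\<in>E \<inter> P. \<forall>f\<in>E \<inter> P. d e f = d f e) \<and>
     (\<forall>e\<in>E. \<forall>r\<in>E. \<forall>z\<in>P. \<forall>f\<in>P. d e f \<le> d e z + d r z + d r f)"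

definition left_conv :: "('a \<Rightarrow> 'a \<Rightarrow> real) \<Rightarrow> (nat \<Rightarrow> 'a) \<Rightarrow> 'a \<Rightarrow> bool" where
  "left_conv d x y \<longleftrightarrow> (\<lambda>n. d (x n) y) \<longlonglongrightarrow> 0"

definition right_conv :: "('a \<Rightarrow> 'a \<Rightarrow> real) \<Rightarrow> (nat \<Rightarrow> 'a) \<Rightarrow> 'a \<Rightarrow> bool" where
  "right_conv d y x \<longleftrightarrow> (\<lambda>n. d x (y n)) \<longlonglongrightarrow> 0"

definition cauchy_biseq :: "('a \<Rightarrow> 'a \<Rightarrow> real) \<Rightarrow> (nat \<Rightarrow> 'a) \<Rightarrow> (nat \<Rightarrow> 'a) \<Rightarrow> bool" where
  "cauchy_biseq d x y \<longleftrightarrow> (\<forall>\<epsilon>>0. \<exists>N. \<forall>n\<ge>N. \<forall>m\<ge>N. d (x n) (y m) < \<epsilon>)"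

definition convergent_biseq :: "'a set \<Rightarrow> 'a set \<Rightarrow> ('a \<Rightarrow> 'a \<Rightarrow> real) \<Rightarrow> (nat \<Rightarrow> 'a) \<Rightarrow> (nat \<Rightarrow> 'a) \<Rightarrow> bool" where
  "convergent_biseq E P d x y \<longleftrightarrow>
     (\<exists>u\<in>E \<inter> P. left_conv d x u \<and> right_conv d y u)"

definition complete_bipolar :: "'a set \<Rightarrow> 'a set \<Rightarrow> ('a \<Rightarrow> 'a \<Rightarrow> real) \<Rightarrow> bool" where
  "complete_bipolar E P d \<longleftrightarrow>
     (\<forall>x y. (\<forall>n. x n \<in> E) \<longrightarrow> (\<forall>n. y n \<in> P) \<longrightarrow> cauchy_biseq d x y \<longrightarrow> convergent_biseq E P d x y)"

end

theory Submission
  imports Defs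
begin

text \<open>
  Writing \<open>\<Phi> t = (\<Sum>\<upsilon>=1..\<sigma>. q \<upsilon> * t ^ \<upsilon>)\<close>, the hypothesis says that \<open>\<Phi> \<circ> d\<close> is
  contracted by the factor \<open>\<pi>\<close>. Since \<open>q 1 * t \<le> \<Phi> t\<close>, iterating gives
  \<open>d (F\<^sup>n e) (F\<^sup>n f) \<le> \<pi>\<^sup>n * \<Phi> (d e f) / q 1\<close>. Hence the orbits of any \<open>e \<in> E\<close> and
  \<open>f \<in> P\<close> form a Cauchy bisequence, whose limit is a fixed point because \<open>\<Phi>\<close> is
  continuous at \<open>0\<close>. A fixed point is its own orbit, so it is a limit of the orbits
  as well, hence equal to their limit.
\<close>

lemma funpow_closed: "F ` A \<subseteq> A \<Longrightarrow> x \<in> A \<Longrightarrow> (F ^^ n) x \<in> A"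
  by (induction n) auto

lemma funpow_fixed_point: "F g = g \<Longrightarrow> (F ^^ n) g = g"
  by (induction n) auto

lemma linear_le_weighted_power_sum:
  fixes q :: "nat \<Rightarrow> real" and t :: real
  assumes "1 \<le> \<sigma>" "\<forall>\<upsilon>\<in>{1..\<sigma>}. 0 \<le> q \<upsilon>" "0 \<le> t"
  shows "q 1 * t \<le> (\<Sum>\<upsilon>=1..\<sigma>. q \<upsilon> * t ^ \<upsilon>)"
proof -
  have "q 1 * t ^ 1 \<le> (\<Sum>\<upsilon>=1..\<sigma>. q \<upsilon> * t ^ \<upsilon>)"
    by (rule member_le_sum) (use assms in auto)
  then show ?thesis by simp
qed

lemma tendsto_zero_if_le_geometric:
  fixes s :: "nat \<Rightarrow> real"
  assumes "\<And>n. 0 \<le> s n" "\<And>n. s n \<le> \<pi> ^ n * c" "0 \<le> \<pi>" "\<pi> < 1"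
  shows "s \<longlonglongrightarrow> 0"
proof (rule tendsto_sandwich[of "\<lambda>n. 0" _ _ "\<lambda>n. \<pi> ^ n * c"])
  show "(\<lambda>n. \<pi> ^ n * c) \<longlonglongrightarrow> 0"
    by (intro tendsto_mult_left_zero LIMSEQ_power_zero) (use assms in auto)
qed (use assms in auto)

locale bipolar_metric =
  fixes E P :: "'a set" and d :: "'a \<Rightarrow> 'a \<Rightarrow> real"
  assumes bipolar_metric_space: "bipolar_metric_space E P d"
begin

lemma nonempty: "E \<noteq> {}" "P \<noteq> {}"
  using bipolar_metric_space by (auto simp: bipolar_metric_space_def)

lemma nonneg: "e \<in> E \<Longrightarrow> f \<in> P \<Longrightarrow> 0 \<le> d e f"
  using bipolar_metric_space by (auto simp: bipolar_metric_space_def)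

lemma zero_iff: "e \<in> E \<Longrightarrow> f \<in> P \<Longrightarrow> d e f = 0 \<longleftrightarrow> e = f"
  using bipolar_metric_space by (auto simp: bipolar_metric_space_def)

lemma quadrangle: "e \<in> E \<Longrightarrow> r \<in> E \<Longrightarrow> z \<in> P \<Longrightarrow> f \<in> P \<Longrightarrow> d e f \<le> d e z + d r z + d r f"
  using bipolar_metric_space unfolding bipolar_metric_space_def by blast

lemma eq_if_le_null_sequence:
  assumes "e \<in> E" "f \<in> P" "\<And>n. d e f \<le> s n" "s \<longlonglongrightarrow> 0"
  shows "e = f"
proof -
  have "d e f \<le> 0"
    using assms(3,4) by (intro LIMSEQ_le_const[of s]) auto
  then show ?thesis
    using nonneg[OF assms(1,2)] zero_iff[OF assms(1,2)] by simp
qed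

lemma left_conv_unique:
  assumes "u \<in> E \<inter> P" "v \<in> P" "\<And>n. x n \<in> E" "left_conv d x u" "left_conv d x v"
  shows "u = v"
proof (rule eq_if_le_null_sequence)
  show "d u v \<le> d (x n) u + d (x n) v" for n
    using quadrangle[of u "x n" u v] assms(1-3) zero_iff[of u u] by auto
  show "(\<lambda>n. d (x n) u + d (x n) v) \<longlonglongrightarrow> 0"
    using tendsto_add[of _ 0 _ _ 0] assms(4,5) by (force simp: left_conv_def)
qed (use assms in auto)

lemma right_conv_unique:
  assumes "u \<in> E \<inter> P" "v \<in> E" "\<And>n. y n \<in> P" "right_conv d y u" "right_conv d y v"
  shows "v = u"
proof (rule eq_if_le_null_sequence)
  show "d v u \<le> d v (y n) + d u (y n)" for n
    using quadrangle[of v u "y n" u] assms(1-3) zero_iff[of u u] by auto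
  show "(\<lambda>n. d v (y n) + d u (y n)) \<longlonglongrightarrow> 0"
    using tendsto_add[of _ 0 _ _ 0] assms(4,5) by (force simp: right_conv_def)
qed (use assms in auto)

lemma geometric_bisequence_bound:
  assumes xE: "\<And>n. x n \<in> E" and yP: "\<And>n. y n \<in> P" and "0 \<le> \<pi>" "\<pi> < 1"
    and diag: "\<And>n. d (x n) (y n) \<le> K * \<pi> ^ n"
    and below: "\<And>n. d (x (Suc n)) (y n) \<le> K * \<pi> ^ n"
    and above: "\<And>n. d (x n) (y (Suc n)) \<le> K * \<pi> ^ n"
  shows "d (x n) (y m) \<le> 2 * K / (1 - \<pi>) * \<pi> ^ min n m"
proof -
  define G where "G = 2 * K / (1 - \<pi>)"
  have "0 \<le> K"
    using diag[of 0] nonneg[OF xE yP, of 0 0] by simp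
  then have "K \<le> G"
    using \<open>0 \<le> \<pi>\<close> \<open>\<pi> < 1\<close> by (simp add: G_def field_simps)
  then have diag_G: "d (x n) (y n) \<le> G * \<pi> ^ n" for n
    using diag[of n] \<open>0 \<le> \<pi>\<close> by (meson mult_right_mono order_trans zero_le_power)
  have step: "2 * K * \<pi> ^ n + G * \<pi> ^ Suc n = G * \<pi> ^ n" for n
    using \<open>\<pi> < 1\<close> by (simp add: G_def field_simps)
  have right: "d (x n) (y (n + k)) \<le> G * \<pi> ^ n" for n k
  proof (induction k arbitrary: n)
    case (Suc k)
    have "d (x n) (y (n + Suc k)) \<le> d (x n) (y n) + d (x (Suc n)) (y n) + d (x (Suc n)) (y (Suc n + k))"
      using quadrangle xE yP by simp
    also have "\<dots> \<le> 2 * K * \<pi> ^ n + G * \<pi> ^ Suc n"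
      using diag[of n] below[of n] Suc.IH[of "Suc n"] by simp
    finally show ?case using step by simp
  qed (simp add: diag_G)
  have left: "d (x (n + k)) (y n) \<le> G * \<pi> ^ n" for n k
  proof (induction k arbitrary: n)
    case (Suc k)
    have "d (x (n + Suc k)) (y n) \<le> d (x (Suc n + k)) (y (Suc n)) + d (x n) (y (Suc n)) + d (x n) (y n)"
      using quadrangle xE yP by simp
    also have "\<dots> \<le> 2 * K * \<pi> ^ n + G * \<pi> ^ Suc n"
      using diag[of n] above[of n] Suc.IH[of "Suc n"] by simp
    finally show ?case using step by simp
  qed (simp add: diag_G)
  show ?thesis
    using right[of n "m - n"] left[of m "n - m"] unfolding G_def
    by (cases "n \<le> m") (simp_all add: min_def)
qed

lemma cauchy_biseq_if_geometric:
  assumes "\<And>n. x n \<in> E" "\<And>n. y n \<in> P" "0 \<le> \<pi>" "\<pi> < 1"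
    and "\<And>n. d (x n) (y n) \<le> K * \<pi> ^ n"
    and "\<And>n. d (x (Suc n)) (y n) \<le> K * \<pi> ^ n"
    and "\<And>n. d (x n) (y (Suc n)) \<le> K * \<pi> ^ n"
  shows "cauchy_biseq d x y"
  unfolding cauchy_biseq_def
proof (intro allI impI)
  fix \<epsilon> :: real
  assume "0 < \<epsilon>"
  define G where "G = 2 * K / (1 - \<pi>)"
  have "(\<lambda>n. G * \<pi> ^ n) \<longlonglongrightarrow> 0"
    by (intro tendsto_mult_right_zero LIMSEQ_power_zero) (use assms(3,4) in auto)
  then have "\<forall>\<^sub>F n in sequentially. G * \<pi> ^ n < \<epsilon>"
    using \<open>0 < \<epsilon>\<close> by (rule order_tendstoD(2))
  then obtain N where N: "\<And>n. n \<ge> N \<Longrightarrow> G * \<pi> ^ n < \<epsilon>"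
    unfolding eventually_sequentially by blast
  have "d (x n) (y m) < \<epsilon>" if "n \<ge> N" "m \<ge> N" for n m
    using geometric_bisequence_bound[OF assms, of n m] N[of "min n m"] that
    unfolding G_def by simp
  then show "\<exists>N. \<forall>n\<ge>N. \<forall>m\<ge>N. d (x n) (y m) < \<epsilon>" by blast
qed

lemma iterates_contract_if_gauge_contracts:
  fixes \<Phi> :: "real \<Rightarrow> real"
  assumes maps_E: "F ` E \<subseteq> E" and maps_P: "F ` P \<subseteq> P" and "0 \<le> \<pi>"
    and contraction: "\<And>e f. e \<in> E \<Longrightarrow> f \<in> P \<Longrightarrow> \<Phi> (d (F e) (F f)) \<le> \<pi> * \<Phi> (d e f)"
    and "0 < c" and linear_le: "\<And>t. 0 \<le> t \<Longrightarrow> c * t \<le> \<Phi> t"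
    and "e \<in> E" "f \<in> P"
  shows "d ((F ^^ n) e) ((F ^^ n) f) \<le> \<pi> ^ n * (\<Phi> (d e f) / c)"
proof -
  have iterated: "\<Phi> (d ((F ^^ n) e) ((F ^^ n) f)) \<le> \<pi> ^ n * \<Phi> (d e f)"
  proof (induction n)
    case (Suc n)
    have "\<Phi> (d ((F ^^ Suc n) e) ((F ^^ Suc n) f)) \<le> \<pi> * \<Phi> (d ((F ^^ n) e) ((F ^^ n) f))"
      using contraction funpow_closed[OF maps_E \<open>e \<in> E\<close>] funpow_closed[OF maps_P \<open>f \<in> P\<close>]
      by simp
    also have "\<dots> \<le> \<pi> * (\<pi> ^ n * \<Phi> (d e f))"
      using Suc.IH \<open>0 \<le> \<pi>\<close> by (rule mult_left_mono)
    finally show ?case by (simp add: mult.assoc)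
  qed simp
  have "c * d ((F ^^ n) e) ((F ^^ n) f) \<le> \<Phi> (d ((F ^^ n) e) ((F ^^ n) f))"
    using assms(7,8) by (intro linear_le nonneg funpow_closed[OF maps_E] funpow_closed[OF maps_P])
  with iterated \<open>0 < c\<close> show ?thesis
    by (simp add: field_simps)
qed

end

locale geometric_iterate_contraction = bipolar_metric +
  fixes F :: "'a \<Rightarrow> 'a" and \<pi> :: real and \<psi> :: "real \<Rightarrow> real"
  assumes complete: "complete_bipolar E P d"
    and maps_E: "F ` E \<subseteq> E" and maps_P: "F ` P \<subseteq> P"
    and rate: "0 \<le> \<pi>" "\<pi> < 1"
    and iterate_bound: "\<And>e f n. e \<in> E \<Longrightarrow> f \<in> P \<Longrightarrow> d ((F ^^ n) e) ((F ^^ n) f) \<le> \<pi> ^ n * \<psi> (d e f)"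
    and gauge_continuous: "isCont \<psi> 0" and gauge_zero: "\<psi> 0 = 0"
begin

lemma iterates_in_E: "e \<in> E \<Longrightarrow> (F ^^ n) e \<in> E"
  using funpow_closed[OF maps_E] .

lemma iterates_in_P: "f \<in> P \<Longrightarrow> (F ^^ n) f \<in> P"
  using funpow_closed[OF maps_P] .

lemma gauge_nonneg: "e \<in> E \<Longrightarrow> f \<in> P \<Longrightarrow> 0 \<le> \<psi> (d e f)"
  using iterate_bound[of e f 0] nonneg[of e f] by simp

lemma iterates_converge:
  assumes "e \<in> E" "f \<in> P"
  shows "(\<lambda>n. d ((F ^^ n) e) ((F ^^ n) f)) \<longlonglongrightarrow> 0"
  using assms iterate_bound rate
  by (intro tendsto_zero_if_le_geometric[of _ \<pi> "\<psi> (d e f)"] nonneg iterates_in_E iterates_in_P)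
    (auto simp: mult.commute)

lemma left_conv_image:
  assumes "\<And>n. x n \<in> E" "u \<in> P" "left_conv d x u"
  shows "left_conv d (\<lambda>n. F (x n)) (F u)"
proof -
  have "(\<lambda>n. \<psi> (d (x n) u)) \<longlonglongrightarrow> \<psi> 0"
    using assms(3) gauge_continuous unfolding left_conv_def by (rule isCont_tendsto_compose[rotated])
  then have "(\<lambda>n. \<pi> * \<psi> (d (x n) u)) \<longlonglongrightarrow> 0"
    using gauge_zero tendsto_mult_right_zero by auto
  moreover have "d (F (x n)) (F u) \<le> \<pi> * \<psi> (d (x n) u)" for n
    using iterate_bound[of "x n" u 1] assms by simp
  moreover have "0 \<le> d (F (x n)) (F u)" for n
    using assms maps_E maps_P by (intro nonneg) auto
  ultimately show ?thesis
    unfolding left_conv_def by (auto intro: tendsto_sandwich[of "\<lambda>n. 0" _ _ "\<lambda>n. \<pi> * \<psi> (d (x n) u)"])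
qed

lemma orbits_cauchy:
  assumes "e \<in> E" "f \<in> P"
  shows "cauchy_biseq d (\<lambda>n. (F ^^ n) e) (\<lambda>n. (F ^^ n) f)"
proof -
  define K where "K = \<psi> (d e f) + \<psi> (d (F e) f) + \<psi> (d e (F f))"
  have "F e \<in> E" "F f \<in> P"
    using assms maps_E maps_P by auto
  then have "0 \<le> \<psi> (d e f)" "0 \<le> \<psi> (d (F e) f)" "0 \<le> \<psi> (d e (F f))"
    using assms gauge_nonneg by auto
  then have "\<psi> (d e f) \<le> K" "\<psi> (d (F e) f) \<le> K" "\<psi> (d e (F f)) \<le> K"
    unfolding K_def by linarith+
  have bound: "d ((F ^^ n) e') ((F ^^ n) f') \<le> K * \<pi> ^ n"
    if "e' \<in> E" "f' \<in> P" "\<psi> (d e' f') \<le> K" for e' f' n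
  proof -
    have "d ((F ^^ n) e') ((F ^^ n) f') \<le> \<pi> ^ n * \<psi> (d e' f')"
      using iterate_bound that(1,2) .
    also have "\<dots> \<le> \<pi> ^ n * K"
      using that(3) rate by (simp add: mult_left_mono)
    finally show ?thesis by (simp add: mult.commute)
  qed
  show ?thesis
  proof (rule cauchy_biseq_if_geometric[OF _ _ rate, where K = K])
    show "(F ^^ n) e \<in> E" "(F ^^ n) f \<in> P" for n
      using assms by (simp_all add: iterates_in_E iterates_in_P)
    show "d ((F ^^ n) e) ((F ^^ n) f) \<le> K * \<pi> ^ n" for n
      using bound[OF assms \<open>\<psi> (d e f) \<le> K\<close>] .
    show "d ((F ^^ Suc n) e) ((F ^^ n) f) \<le> K * \<pi> ^ n" for n
      using bound[OF \<open>F e \<in> E\<close> assms(2) \<open>\<psi> (d (F e) f) \<le> K\<close>]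
      by (simp add: funpow_Suc_right del: funpow.simps)
    show "d ((F ^^ n) e) ((F ^^ Suc n) f) \<le> K * \<pi> ^ n" for n
      using bound[OF assms(1) \<open>F f \<in> P\<close> \<open>\<psi> (d e (F f)) \<le> K\<close>]
      by (simp add: funpow_Suc_right del: funpow.simps)
  qed
qed

lemma limit_of_orbit_is_fixed:
  assumes "e \<in> E" "u \<in> E \<inter> P" "left_conv d (\<lambda>n. (F ^^ n) e) u"
  shows "F u = u"
proof -
  have "F u \<in> P"
    using assms(2) maps_P by auto
  have "left_conv d (\<lambda>n. F ((F ^^ n) e)) (F u)"
    using assms by (intro left_conv_image iterates_in_E) auto
  then have to_Fu: "left_conv d (\<lambda>n. (F ^^ Suc n) e) (F u)"
    by simp
  have to_u: "left_conv d (\<lambda>n. (F ^^ Suc n) e) u"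
    using assms(3) LIMSEQ_Suc unfolding left_conv_def by blast
  show ?thesis
    using left_conv_unique[OF assms(2) \<open>F u \<in> P\<close> iterates_in_E[OF assms(1)] to_u to_Fu] by simp
qed

lemma fixed_point_eq_limit:
  assumes "e \<in> E" "f \<in> P" "u \<in> E \<inter> P"
    and "left_conv d (\<lambda>n. (F ^^ n) e) u" "right_conv d (\<lambda>n. (F ^^ n) f) u"
    and "g \<in> E \<union> P" "F g = g"
  shows "g = u"
proof -
  have orbit: "(F ^^ n) g = g" for n
    using funpow_fixed_point assms(7) .
  show ?thesis
  proof (cases "g \<in> E")
    case True
    then have "right_conv d (\<lambda>n. (F ^^ n) f) g"
      using iterates_converge[OF True assms(2)] orbit unfolding right_conv_def by simp
    then show ?thesis
      using right_conv_unique[OF assms(3) True iterates_in_P[OF assms(2)] assms(5)] by simp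
  next
    case False
    with assms(6) have "g \<in> P" by simp
    then have "left_conv d (\<lambda>n. (F ^^ n) e) g"
      using iterates_converge[OF assms(1) \<open>g \<in> P\<close>] orbit unfolding left_conv_def by simp
    then show ?thesis
      using left_conv_unique[OF assms(3) \<open>g \<in> P\<close> iterates_in_E[OF assms(1)] assms(4)] by simp
  qed
qed

theorem unique_fixed_point: "\<exists>!g. g \<in> E \<union> P \<and> F g = g"
proof -
  obtain e f where e: "e \<in> E" and f: "f \<in> P"
    using nonempty by blast
  have "cauchy_biseq d (\<lambda>n. (F ^^ n) e) (\<lambda>n. (F ^^ n) f)"
    using orbits_cauchy[OF e f] .
  then obtain u where u: "u \<in> E \<inter> P"
    and e_u: "left_conv d (\<lambda>n. (F ^^ n) e) u" and f_u: "right_conv d (\<lambda>n. (F ^^ n) f) u"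
    using complete[unfolded complete_bipolar_def, rule_format, of "\<lambda>n. (F ^^ n) e" "\<lambda>n. (F ^^ n) f"]
      iterates_in_E[OF e] iterates_in_P[OF f]
    unfolding convergent_biseq_def by blast
  show ?thesis
  proof (rule ex1I)
    show "u \<in> E \<union> P \<and> F u = u"
      using u limit_of_orbit_is_fixed[OF e u e_u] by blast
    show "g = u" if "g \<in> E \<union> P \<and> F g = g" for g
      using fixed_point_eq_limit[OF e f u e_u f_u] that by blast
  qed
qed

end

theorem corollary3p6:
  fixes E P :: "'a set" and d :: "'a \<Rightarrow> 'a \<Rightarrow> real" and F :: "'a \<Rightarrow> 'a"
    and \<pi> :: real and \<sigma> :: nat and q :: "nat \<Rightarrow> real"
  assumes "bipolar_metric_space E P d"
    and "complete_bipolar E P d"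
    and "F ` E \<subseteq> E" and "F ` P \<subseteq> P"
    and "0 < \<pi>" and "\<pi> < 1"
    and "1 \<le> \<sigma>"
    and "\<forall>\<upsilon>\<in>{1..\<sigma>}. 0 < q \<upsilon>"
    and "\<forall>e\<in>E. \<forall>f\<in>P. (\<Sum>\<upsilon>=1..\<sigma>. q \<upsilon> * (d (F e) (F f)) ^ \<upsilon>)
                         \<le> \<pi> * (\<Sum>\<upsilon>=1..\<sigma>. q \<upsilon> * (d e f) ^ \<upsilon>)"
  shows "\<exists>!g. g \<in> E \<union> P \<and> F g = g"
proof -
  interpret bipolar_metric E P d
    using assms(1) by unfold_locales
  define \<Phi> where "\<Phi> t = (\<Sum>\<upsilon>=1..\<sigma>. q \<upsilon> * t ^ \<upsilon>)" for t
  have "0 < q 1"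
    using assms(7,8) by simp
  have "q 1 * t \<le> \<Phi> t" if "0 \<le> t" for t
    unfolding \<Phi>_def using assms(7,8) that by (intro linear_le_weighted_power_sum) auto
  moreover have "\<Phi> (d (F e) (F f)) \<le> \<pi> * \<Phi> (d e f)" if "e \<in> E" "f \<in> P" for e f
    using assms(9) that unfolding \<Phi>_def by blast
  ultimately have "d ((F ^^ n) e) ((F ^^ n) f) \<le> \<pi> ^ n * (\<Phi> (d e f) / q 1)"
    if "e \<in> E" "f \<in> P" for e f n
    using assms(3-5) \<open>0 < q 1\<close> that by (intro iterates_contract_if_gauge_contracts) auto
  moreover have "isCont (\<lambda>t. \<Phi> t / q 1) 0"
    unfolding \<Phi>_def using \<open>0 < q 1\<close> by (intro continuous_intros) auto
  moreover have "\<Phi> 0 / q 1 = 0"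
    unfolding \<Phi>_def by simp
  ultimately interpret geometric_iterate_contraction E P d F \<pi> "\<lambda>t. \<Phi> t / q 1"
    using assms(2-6) by unfold_locales auto
  show ?thesis
    by (rule unique_fixed_point)
qed

end
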